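(* Let $\langle \mathcal{B},\le_t,\le_k\rangle$ be a complete, infinitely distributive bilattice with negation satisfying the infinitary interlacing conditions, with $\mathcal U$ and $\mathcal O$ the bottom and top of $\le_k$. Let $I$ be an interpretation (a function from the Herbrand base to $\mathcal B$), let $B$ be a closed formula and $\alpha\in\mathcal B$. Then $B\equiv_I\alpha$ if and only if $I(B)=\alpha$ and $I_{\mathcal O}(B)=\alpha$.
   Context: In the bilattice, $\wedge,\vee$ denote meet and join for $\le_t$ and $\otimes,\oplus$ meet and join for $\le_k$; $\bigwedge,\bigvee,\bigotimes,\bigoplus$ are the infinitary versions. Infinitely distributive means all finitary and infinitary distributive laws connecting $\wedge,\vee,\otimes,\oplus$ hold; the infinitary interlacing conditions mean each of these finitary and infinitary meets and joins is monotone with respect to both orderings. A closed formula is built from ground literals (ground atoms $A$ and negated ground atoms $\neg A$) and elements of $\mathcal B$ using $\wedge,\vee,\otimes,\oplus$ and quantifiers $\exists,\forall$ ranging over closed terms. An interpretation $I$ is extended to closed formulas by $I(\neg A)=\neg I(A)$, $I(X\wedge Y)=I(X)\wedge I(Y)$ (similarly for $\vee,\otimes,\oplus$), $I(v)=v$ for $v\in\mathcal B$, $I(\exists x\,\phi(x))=\bigvee_{t} I(\phi(t))$ and $I(\forall x\,\phi(x))=\bigwedge_t I(\phi(t))$, $t$ ranging over closed terms. For interpretations $I,J$, write $I\le J$ ("$I$ is a part of $J$") if for every ground atom $A$, $I(A)\neq\mathcal U$ implies $I(A)=J(A)$. For a closed formula $B$, $B\equiv_I\alpha$ means $J(B)=\alpha$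 for every interpretation $J$ with $I\le J$. $I_{\mathcal O}$ is the interpretation with $I_{\mathcal O}(A)=I(A)$ if $I(A)\neq\mathcal U$ and $I_{\mathcal O}(A)=\mathcal O$ otherwise. *)

theory Defs
  imports Main
begin

definition is_lub :: "('b \<Rightarrow> 'b \<Rightarrow> bool) \<Rightarrow> 'b set \<Rightarrow> 'b \<Rightarrow> bool" where
  "is_lub le S x \<longleftrightarrow> (\<forall>y\<in>S. le y x) \<and> (\<forall>z. (\<forall>y\<in>S. le y z) \<longrightarrow> le x z)"

definition is_glb :: "('b \<Rightarrow> 'b \<Rightarrow> bool) \<Rightarrow> 'b set \<Rightarrow> 'b \<Rightarrow> bool" where
  "is_glb le S x \<longleftrightarrow> (\<forall>y\<in>S. le x y) \<and> (\<forall>z. (\<forall>y\<in>S. le z y) \<longrightarrow> le z x)"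

definition lub :: "('b \<Rightarrow> 'b \<Rightarrow> bool) \<Rightarrow> 'b set \<Rightarrow> 'b" where
  "lub le S = (THE x. is_lub le S x)"

definition glb :: "('b \<Rightarrow> 'b \<Rightarrow> bool) \<Rightarrow> 'b set \<Rightarrow> 'b" where
  "glb le S = (THE x. is_glb le S x)"

definition partial_order_rel :: "('b \<Rightarrow> 'b \<Rightarrow> bool) \<Rightarrow> bool" where
  "partial_order_rel le \<longleftrightarrow> (\<forall>x. le x x) \<and> (\<forall>x y. le x y \<and> le y x \<longrightarrow> x = y)
     \<and> (\<forall>x y z. le x y \<and> le y z \<longrightarrow> le x z)"

definition complete_rel :: "('b \<Rightarrow> 'b \<Rightarrow> bool) \<Rightarrow> bool" where
  "complete_rel le \<longleftrightarrow> (\<forall>S. (\<exists>x. is_lub le S x) \<and> (\<exists>x. is_glb le S x))"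

text \<open>The four (finitary and infinitary) operations, indexed by i < 4:
  0: meet for le_t (\<and>, big \<And>), 1: join for le_t (\<or>, big \<Or>),
  2: meet for le_k (\<otimes>), 3: join for le_k (\<oplus>).\<close>

definition bop :: "('b \<Rightarrow> 'b \<Rightarrow> bool) \<Rightarrow> ('b \<Rightarrow> 'b \<Rightarrow> bool) \<Rightarrow> nat \<Rightarrow> 'b set \<Rightarrow> 'b" where
  "bop tle kle i S = (if i = 0 then glb tle S else if i = 1 then lub tle S
                      else if i = 2 then glb kle S else lub kle S)"

abbreviation tand where "tand tle a b \<equiv> glb tle {a, b}"
abbreviation tor  where "tor tle a b \<equiv> lub tle {a, b}"

definition complete_bilattice_neg ::
  "('b \<Rightarrow> 'b \<Rightarrow> bool) \<Rightarrow> ('b \<Rightarrow> 'b \<Rightarrow> bool) \<Rightarrow> ('b \<Rightarrow> 'b) \<Rightarrow> bool" where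
  "complete_bilattice_neg tle kle neg \<longleftrightarrow>
     partial_order_rel tle \<and> partial_order_rel kle \<and> complete_rel tle \<and> complete_rel kle \<and>
     (\<forall>x y. tle x y \<longrightarrow> tle (neg y) (neg x)) \<and>
     (\<forall>x y. kle x y \<longrightarrow> kle (neg x) (neg y)) \<and>
     (\<forall>x. neg (neg x) = x)"

definition infinitely_distributive ::
  "('b \<Rightarrow> 'b \<Rightarrow> bool) \<Rightarrow> ('b \<Rightarrow> 'b \<Rightarrow> bool) \<Rightarrow> bool" where
  "infinitely_distributive tle kle \<longleftrightarrow>
     (\<forall>i<4. \<forall>j<4. i \<noteq> j \<longrightarrow>
        (\<forall>a b c. bop tle kle i {a, bop tle kle j {b, c}}
                 = bop tle kle j {bop tle kle i {a, b}, bop tle kle i {a, c}}) \<and>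
        (\<forall>a S. S \<noteq> {} \<longrightarrow> bop tle kle i {a, bop tle kle j S}
                 = bop tle kle j ((\<lambda>s. bop tle kle i {a, s}) ` S)))"

text \<open>Infinitary monotonicity is stated for families
  f, g indexed by an index set Ix (index type 'b \<times> 'b, large enough for all families
  of elements of the carrier).\<close>

definition infinitely_interlaced ::
  "('b \<Rightarrow> 'b \<Rightarrow> bool) \<Rightarrow> ('b \<Rightarrow> 'b \<Rightarrow> bool) \<Rightarrow> bool" where
  "infinitely_interlaced tle kle \<longleftrightarrow>
     (\<forall>i<4. \<forall>le \<in> {tle, kle}.
        (\<forall>a b c. le a b \<longrightarrow> le (bop tle kle i {a, c}) (bop tle kle i {b, c})) \<and>
        (\<forall>(Ix :: ('b \<times> 'b) set) f g. (\<forall>x\<in>Ix. le (f x) (g x)) \<longrightarrow>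
             le (bop tle kle i (f ` Ix)) (bop tle kle i (g ` Ix))))"

definition kbot :: "('b \<Rightarrow> 'b \<Rightarrow> bool) \<Rightarrow> 'b" where "kbot kle = glb kle UNIV"
definition ktop :: "('b \<Rightarrow> 'b \<Rightarrow> bool) \<Rightarrow> 'b" where "ktop kle = lub kle UNIV"

text \<open>'a is the Herbrand base (ground atoms), 't the set of closed terms, 'b the bilattice.
  Quantified formulas are represented by their instance map t \<mapsto> \<phi>(t).\<close>

datatype ('a, 't, 'b) cform =
    Atom 'a
  | NegAtom 'a
  | Val 'b
  | TAnd "('a, 't, 'b) cform" "('a, 't, 'b) cform"
  | TOr "('a, 't, 'b) cform" "('a, 't, 'b) cform"
  | KAnd "('a, 't, 'b) cform" "('a, 't, 'b) cform"
  | KOr "('a, 't, 'b) cform" "('a, 't, 'b) cform"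
  | Exists "'t \<Rightarrow> ('a, 't, 'b) cform"
  | Forall "'t \<Rightarrow> ('a, 't, 'b) cform"

primrec eval :: "('b \<Rightarrow> 'b \<Rightarrow> bool) \<Rightarrow> ('b \<Rightarrow> 'b \<Rightarrow> bool) \<Rightarrow> ('b \<Rightarrow> 'b) \<Rightarrow> ('a \<Rightarrow> 'b)
                 \<Rightarrow> ('a, 't, 'b) cform \<Rightarrow> 'b" where
  "eval tle kle neg I (Atom A) = I A"
| "eval tle kle neg I (NegAtom A) = neg (I A)"
| "eval tle kle neg I (Val v) = v"
| "eval tle kle neg I (TAnd X Y) = glb tle {eval tle kle neg I X, eval tle kle neg I Y}"
| "eval tle kle neg I (TOr X Y) = lub tle {eval tle kle neg I X, eval tle kle neg I Y}"
| "eval tle kle neg I (KAnd X Y) = glb kle {eval tle kle neg I X, eval tle kle neg I Y}"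
| "eval tle kle neg I (KOr X Y) = lub kle {eval tle kle neg I X, eval tle kle neg I Y}"
| "eval tle kle neg I (Exists \<phi>) = lub tle (range (\<lambda>t. eval tle kle neg I (\<phi> t)))"
| "eval tle kle neg I (Forall \<phi>) = glb tle (range (\<lambda>t. eval tle kle neg I (\<phi> t)))"

definition part_of :: "('b \<Rightarrow> 'b \<Rightarrow> bool) \<Rightarrow> ('a \<Rightarrow> 'b) \<Rightarrow> ('a \<Rightarrow> 'b) \<Rightarrow> bool" where
  "part_of kle I J \<longleftrightarrow> (\<forall>A. I A \<noteq> kbot kle \<longrightarrow> I A = J A)"

definition equiv_I ::
  "('b \<Rightarrow> 'b \<Rightarrow> bool) \<Rightarrow> ('b \<Rightarrow> 'b \<Rightarrow> bool) \<Rightarrow> ('b \<Rightarrow> 'b) \<Rightarrow> ('a \<Rightarrow> 'b)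
     \<Rightarrow> ('a, 't, 'b) cform \<Rightarrow> 'b \<Rightarrow> bool" where
  "equiv_I tle kle neg I B \<alpha> \<longleftrightarrow> (\<forall>J. part_of kle I J \<longrightarrow> eval tle kle neg J B = \<alpha>)"

definition interp_O :: "('b \<Rightarrow> 'b \<Rightarrow> bool) \<Rightarrow> ('a \<Rightarrow> 'b) \<Rightarrow> 'a \<Rightarrow> 'b" where
  "interp_O kle I A = (if I A \<noteq> kbot kle then I A else ktop kle)"

end

theory Submission
  imports Defs
begin

text \<open>Being a part of \<open>I\<close> squeezes an interpretation \<open>J\<close> between \<open>I\<close> and \<open>I\<^sub>O\<close> in the
  knowledge order, atom by atom. By interlacing, valuation of closed formulas is monotone in
  \<open>\<le>\<^sub>k\<close>, so \<open>I(B) \<le>\<^sub>k J(B) \<le>\<^sub>k I\<^sub>O(B)\<close>; if both ends equal \<open>\<alpha>\<close>, so does the middle.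
  Conversely \<open>I\<close> and \<open>I\<^sub>O\<close> are themselves extensions of \<open>I\<close>.\<close>

lemma partial_order_relD:
  assumes "partial_order_rel le"
  shows partial_order_rel_refl: "le x x"
    and partial_order_rel_antisym: "le x y \<Longrightarrow> le y x \<Longrightarrow> x = y"
    and partial_order_rel_trans: "le x y \<Longrightarrow> le y z \<Longrightarrow> le x z"
  using assms unfolding partial_order_rel_def by blast+

lemma is_glb_glb:
  assumes "partial_order_rel le" "complete_rel le"
  shows "is_glb le S (glb le S)"
proof -
  obtain x where x: "is_glb le S x" using assms(2) unfolding complete_rel_def by blast
  moreover have "y = x" if "is_glb le S y" for y
    using x that partial_order_rel_antisym[OF assms(1)] unfolding is_glb_def by blast
  ultimately show ?thesis unfolding glb_def by (rule theI)
qed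

lemma is_lub_lub:
  assumes "partial_order_rel le" "complete_rel le"
  shows "is_lub le S (lub le S)"
proof -
  obtain x where x: "is_lub le S x" using assms(2) unfolding complete_rel_def by blast
  moreover have "y = x" if "is_lub le S y" for y
    using x that partial_order_rel_antisym[OF assms(1)] unfolding is_lub_def by blast
  ultimately show ?thesis unfolding lub_def by (rule theI)
qed

lemma kbot_least:
  assumes "partial_order_rel kle" "complete_rel kle"
  shows "kle (kbot kle) x"
  using is_glb_glb[OF assms, of UNIV] unfolding kbot_def is_glb_def by blast

lemma ktop_greatest:
  assumes "partial_order_rel kle" "complete_rel kle"
  shows "kle x (ktop kle)"
  using is_lub_lub[OF assms, of UNIV] unfolding ktop_def is_lub_def by blast

lemma infinitely_interlacedD:
  fixes tle kle :: "'b \<Rightarrow> 'b \<Rightarrow> bool" and Ix :: "('b \<times> 'b) set"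
  assumes "infinitely_interlaced tle kle" and "i < 4" and "le \<in> {tle, kle}"
  shows "le a b \<Longrightarrow> le (bop tle kle i {a, c}) (bop tle kle i {b, c})"
    and "(\<And>x. x \<in> Ix \<Longrightarrow> le (f x) (g x)) \<Longrightarrow>
           le (bop tle kle i (f ` Ix)) (bop tle kle i (g ` Ix))"
proof -
  note H = assms(1)[unfolded infinitely_interlaced_def, THEN spec, THEN mp, OF assms(2),
      THEN bspec, OF assms(3)]
  show "le a b \<Longrightarrow> le (bop tle kle i {a, c}) (bop tle kle i {b, c})"
    by (rule H[THEN conjunct1, rule_format])
  show "(\<And>x. x \<in> Ix \<Longrightarrow> le (f x) (g x)) \<Longrightarrow>
           le (bop tle kle i (f ` Ix)) (bop tle kle i (g ` Ix))"
    by (rule H[THEN conjunct2, rule_format]) blast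
qed

lemma interlaced_kle_mono2:
  assumes po: "partial_order_rel kle" and il: "infinitely_interlaced tle kle"
    and i: "i < 4" and "kle a b" "kle c d"
  shows "kle (bop tle kle i {a, c}) (bop tle kle i {b, d})"
proof -
  note mono_left = infinitely_interlacedD(1)[OF il i insertI2[OF insertI1]]
  have "kle (bop tle kle i {a, c}) (bop tle kle i {b, c})" by (rule mono_left) fact
  moreover have "kle (bop tle kle i {c, b}) (bop tle kle i {d, b})" by (rule mono_left) fact
  then have "kle (bop tle kle i {b, c}) (bop tle kle i {b, d})" by (simp add: insert_commute)
  ultimately show ?thesis by (rule partial_order_rel_trans[OF po])
qed

text \<open>The interlacing condition only speaks of families indexed by subsets of
  \<open>'b \<times> 'b\<close>; a family indexed by terms is reindexed by the pairs \<open>(F t, G t)\<close>.\<close>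

lemma interlaced_kle_mono_range:
  fixes tle kle :: "'b \<Rightarrow> 'b \<Rightarrow> bool" and F G :: "'t \<Rightarrow> 'b"
  assumes il: "infinitely_interlaced tle kle" and i: "i < 4"
    and FG: "\<And>t. kle (F t) (G t)"
  shows "kle (bop tle kle i (range F)) (bop tle kle i (range G))"
proof -
  let ?Ix = "range (\<lambda>t. (F t, G t))"
  have "kle (bop tle kle i (fst ` ?Ix)) (bop tle kle i (snd ` ?Ix))"
    by (rule infinitely_interlacedD(2)[OF il i insertI2[OF insertI1]]) (auto simp: FG)
  moreover have "fst ` ?Ix = range F" "snd ` ?Ix = range G" by (auto simp: image_image)
  ultimately show ?thesis by simp
qed

lemma eval_kle_mono:
  assumes bl: "complete_bilattice_neg tle kle neg" and il: "infinitely_interlaced tle kle"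
    and JJ': "\<And>A. kle (J A) (J' A)"
  shows "kle (eval tle kle neg J B) (eval tle kle neg J' B)"
proof -
  have po: "partial_order_rel kle"
    and neg_mono: "\<And>x y. kle x y \<Longrightarrow> kle (neg x) (neg y)"
    using bl unfolding complete_bilattice_neg_def by blast+
  note mono2 = interlaced_kle_mono2[OF po il] and mono_range = interlaced_kle_mono_range[OF il]
  show ?thesis
  proof (induction B)
    case (Atom A)
    show ?case by (simp add: JJ')
  next
    case (NegAtom A)
    show ?case by (simp add: JJ' neg_mono)
  next
    case (Val v)
    show ?case by (simp add: partial_order_rel_refl[OF po])
  next
    case (TAnd X Y)
    show ?case using mono2[of 0, OF _ TAnd.IH] by (simp add: bop_def)
  next
    case (TOr X Y)
    show ?case using mono2[of 1, OF _ TOr.IH] by (simp add: bop_def)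
  next
    case (KAnd X Y)
    show ?case using mono2[of 2, OF _ KAnd.IH] by (simp add: bop_def)
  next
    case (KOr X Y)
    show ?case using mono2[of 3, OF _ KOr.IH] by (simp add: bop_def)
  next
    case (Exists \<phi>)
    show ?case using mono_range[of 1, OF _ Exists.IH[OF rangeI]] by (simp add: bop_def)
  next
    case (Forall \<phi>)
    show ?case using mono_range[of 0, OF _ Forall.IH[OF rangeI]] by (simp add: bop_def)
  qed
qed

lemma part_of_refl: "part_of kle I I"
  by (simp add: part_of_def)

lemma part_of_interp_O: "part_of kle I (interp_O kle I)"
  by (simp add: part_of_def interp_O_def)

lemma part_of_kle_between:
  assumes "partial_order_rel kle" "complete_rel kle" and "part_of kle I J"
  shows "kle (I A) (J A)" and "kle (J A) (interp_O kle I A)"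
  using assms(3) partial_order_rel_refl[OF assms(1)] kbot_least[OF assms(1,2)]
    ktop_greatest[OF assms(1,2)]
  unfolding part_of_def interp_O_def by (cases "I A = kbot kle"; simp)+

theorem lemma1:
  fixes tle kle :: "'b \<Rightarrow> 'b \<Rightarrow> bool" and neg :: "'b \<Rightarrow> 'b"
    and I :: "'a \<Rightarrow> 'b" and B :: "('a, 't, 'b) cform" and \<alpha> :: 'b
  assumes "complete_bilattice_neg tle kle neg"
    and "infinitely_distributive tle kle"
    and "infinitely_interlaced tle kle"
  shows "equiv_I tle kle neg I B \<alpha> \<longleftrightarrow>
           (eval tle kle neg I B = \<alpha> \<and> eval tle kle neg (interp_O kle I) B = \<alpha>)"
proof
  assume "equiv_I tle kle neg I B \<alpha>"
  then show "eval tle kle neg I B = \<alpha> \<and> eval tle kle neg (interp_O kle I) B = \<alpha>"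
    using part_of_refl part_of_interp_O unfolding equiv_I_def by blast
next
  assume ends: "eval tle kle neg I B = \<alpha> \<and> eval tle kle neg (interp_O kle I) B = \<alpha>"
  have po: "partial_order_rel kle" and cr: "complete_rel kle"
    using assms(1) unfolding complete_bilattice_neg_def by blast+
  show "equiv_I tle kle neg I B \<alpha>"
    unfolding equiv_I_def
  proof (intro allI impI)
    fix J assume J: "part_of kle I J"
    have "kle (eval tle kle neg I B) (eval tle kle neg J B)"
      by (rule eval_kle_mono[OF assms(1,3) part_of_kle_between(1)[OF po cr J]])
    moreover have "kle (eval tle kle neg J B) (eval tle kle neg (interp_O kle I) B)"
      by (rule eval_kle_mono[OF assms(1,3) part_of_kle_between(2)[OF po cr J]])
    ultimately show "eval tle kle neg J B = \<alpha>"
      using ends partial_order_rel_antisym[OF po] by simp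
  qed
qed

end
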